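(* Let $x\in C[0,1]$ have Faber--Schauder development $$x=x(0)+(x(1)-x(0))e_\emptyset+\sum_{m=0}^\infty\sum_{k=0}^{2^m-1}\theta_{m,k}e_{m,k},\qquad \theta_{m,k}=2^{m/2}\Big(2x\big(\tfrac{2k+1}{2^{m+1}}\big)-x\big(\tfrac k{2^m}\big)-x\big(\tfrac{k+1}{2^m}\big)\Big),$$ and let $(\mathbb{T}_n)$ be the sequence of dyadic partitions. Then, for $t\in\bigcup_n\mathbb{T}_n$, the following conditions are equivalent. (a) The quadratic variation $\langle x\rangle_t$ (along the dyadic partitions) exists. (b) The limit $\ell_1(t):=\lim_{n\to\infty}\frac1{2^n}\sum_{m=0}^{n-1}\sum_{k=0}^{\lfloor (2^m-1)t\rfloor}\theta_{m,k}^2$ exists. (c) The limit $\ell_2(t):=\lim_{n\to\infty}\frac1{2^n}\sum_{k=0}^{\lfloor (2^n-1)t\rfloor}\theta_{n,k}^2$ exists. In this case, $\langle x\rangle_t=\ell_1(t)=\ell_2(t)$.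
   Context: The dyadic partitions are $\mathbb{T}_n=\{k2^{-n}: k=0,\dots,2^n\}$. For $s\in\mathbb{T}_n$, $s'$ denotes the successor of $s$ in $\mathbb{T}_n$ ($s'=\min\{t\in\mathbb{T}_n: t>s\}$ if $s<1$, and $s'=1$ if $s=1$). For $x\in C[0,1]$, $\langle x\rangle^n_t:=\sum_{s\in\mathbb{T}_n,\,s\le t}(x(s')-x(s))^2$, and $x$ admits the quadratic variation $\langle x\rangle_t$ at $t$ if $\langle x\rangle_t:=\lim_{n\to\infty}\langle x\rangle^n_t$ exists. The Faber--Schauder functions on $[0,1]$ are $e_\emptyset(t)=t$, $e_{0,0}(t)=\max\{0,\min\{t,1-t\}\}$, and $e_{n,k}(t)=2^{-n/2}e_{0,0}(2^nt-k)$ for $n\ge1$, $k=0,\dots,2^n-1$; every $x\in C[0,1]$ has the uniformly convergent development stated in the claim. *)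

theory Defs
  imports "HOL-Analysis.Analysis"
begin

definition dyadic_part :: "nat \<Rightarrow> real set" where
  "dyadic_part n = {real k / 2 ^ n | k. k \<le> 2 ^ n}"

definition dyadic_succ :: "nat \<Rightarrow> real \<Rightarrow> real" where
  "dyadic_succ n s = (if s < 1 then Min {u \<in> dyadic_part n. u > s} else 1)"

definition qv_n :: "(real \<Rightarrow> real) \<Rightarrow> nat \<Rightarrow> real \<Rightarrow> real" where
  "qv_n x n t = (\<Sum>s \<in> {s \<in> dyadic_part n. s \<le> t}. (x (dyadic_succ n s) - x s) ^ 2)"

definition fs_coeff :: "(real \<Rightarrow> real) \<Rightarrow> nat \<Rightarrow> nat \<Rightarrow> real" where
  "fs_coeff x m k = 2 powr (real m / 2) *
     (2 * x ((2 * real k + 1) / 2 ^ (m + 1)) - x (real k / 2 ^ m) - x ((real k + 1) / 2 ^ m))"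

definition ell1_seq :: "(real \<Rightarrow> real) \<Rightarrow> real \<Rightarrow> nat \<Rightarrow> real" where
  "ell1_seq x t n = (1 / 2 ^ n) *
     (\<Sum>m<n. \<Sum>k = 0..nat \<lfloor>(2 ^ m - 1) * t\<rfloor>. (fs_coeff x m k) ^ 2)"

definition ell2_seq :: "(real \<Rightarrow> real) \<Rightarrow> real \<Rightarrow> nat \<Rightarrow> real" where
  "ell2_seq x t n = (1 / 2 ^ n) *
     (\<Sum>k = 0..nat \<lfloor>(2 ^ n - 1) * t\<rfloor>. (fs_coeff x n k) ^ 2)"

end

theory Submission
  imports Defs
begin

text \<open>
  Write D(n,k) = x((k+1)/2^n) - x(k/2^n). The parallelogram law gives
  D(n+1,2k)^2 + D(n+1,2k+1)^2 = D(n,k)^2/2 + theta(n,k)^2/2^(n+1): refining the dyadic partition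
  from level n to level n+1 increases 2^n times the squared increments up to t exactly by the
  squared Faber--Schauder coefficients of level n up to t. Hence for t = j/2^N and n \<ge> N the
  n-th approximations of the quadratic variation and of ell_1(t) differ by K/2^n plus the
  squared increment of x over [t, t + 2^-n], which vanishes by continuity. Finally the
  approximations of ell_1 and ell_2 satisfy a(n+1) = (a(n) + b(n))/2, and such an averaging
  recurrence converges iff its input does, to the same limit.
\<close>

lemma halving_recurrence_tendsto_zero:
  fixes e d :: "nat \<Rightarrow> real"
  assumes rec: "\<And>n. \<bar>e (Suc n)\<bar> \<le> \<bar>e n\<bar> / 2 + \<bar>d n\<bar>" and d: "d \<longlonglongrightarrow> 0"
  shows "e \<longlonglongrightarrow> 0"
proof (rule LIMSEQ_I)
  fix r :: real assume r: "0 < r"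
  obtain M where M: "\<And>n. n \<ge> M \<Longrightarrow> \<bar>d n\<bar> < r / 4"
    using LIMSEQ_D[OF d, of "r / 4"] r by auto
  have bound: "\<bar>e (M + i)\<bar> \<le> \<bar>e M\<bar> / 2 ^ i + r / 2" for i
  proof (induction i)
    case 0
    show ?case using r by simp
  next
    case (Suc i)
    have "\<bar>e (M + Suc i)\<bar> \<le> \<bar>e (M + i)\<bar> / 2 + r / 4"
      using rec[of "M + i"] M[of "M + i"] by simp
    also have "\<dots> \<le> \<bar>e M\<bar> / 2 ^ Suc i + r / 2"
      using Suc.IH by simp
    finally show ?case .
  qed
  obtain I where I: "\<And>i. i \<ge> I \<Longrightarrow> \<bar>e M\<bar> / 2 ^ i < r / 2"
    using LIMSEQ_D[OF LIMSEQ_divide_realpow_zero[of 2 "\<bar>e M\<bar>"], of "r / 2"] r by auto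
  show "\<exists>n0. \<forall>n\<ge>n0. norm (e n - 0) < r"
  proof (intro exI allI impI)
    fix n assume "n \<ge> M + I"
    then have "\<bar>e M\<bar> / 2 ^ (n - M) < r / 2" and "\<bar>e n\<bar> \<le> \<bar>e M\<bar> / 2 ^ (n - M) + r / 2"
      using I bound[of "n - M"] by simp_all
    then have "\<bar>e n\<bar> < r" by linarith
    then show "norm (e n - 0) < r" by simp
  qed
qed

lemma averaging_recurrence_tendsto_iff:
  fixes b c :: "nat \<Rightarrow> real"
  assumes rec: "\<And>n. b (Suc n) = (b n + c n) / 2"
  shows "b \<longlonglongrightarrow> L \<longleftrightarrow> c \<longlonglongrightarrow> L"
proof
  assume "b \<longlonglongrightarrow> L"
  then have "(\<lambda>n. 2 * b (Suc n) - b n) \<longlonglongrightarrow> 2 * L - L"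
    by (intro tendsto_intros LIMSEQ_Suc)
  moreover have "(\<lambda>n. 2 * b (Suc n) - b n) = c"
    using rec by (simp add: field_simps)
  ultimately show "c \<longlonglongrightarrow> L" by simp
next
  assume c: "c \<longlonglongrightarrow> L"
  have "\<bar>b (Suc n) - L\<bar> \<le> \<bar>b n - L\<bar> / 2 + \<bar>(c n - L) / 2\<bar>" for n
  proof -
    have "b (Suc n) - L = (b n - L) / 2 + (c n - L) / 2"
      unfolding rec by (simp add: field_simps)
    then show ?thesis by (metis abs_triangle_ineq abs_divide abs_numeral)
  qed
  moreover have "(\<lambda>n. (c n - L) / 2) \<longlonglongrightarrow> 0"
    using c by (intro tendsto_divide_zero) (simp add: LIM_zero_iff)
  ultimately have "(\<lambda>n. b n - L) \<longlonglongrightarrow> 0"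
    by (rule halving_recurrence_tendsto_zero)
  then show "b \<longlonglongrightarrow> L" by (simp add: LIM_zero_iff)
qed

lemma tendsto_iff_diff_tendsto_zero:
  fixes f g :: "'a \<Rightarrow> 'b::real_normed_vector"
  assumes "((\<lambda>n. f n - g n) \<longlongrightarrow> 0) F"
  shows "(f \<longlongrightarrow> L) F \<longleftrightarrow> (g \<longlongrightarrow> L) F"
proof -
  have "((\<lambda>n. g n - f n) \<longlongrightarrow> 0) F"
    using tendsto_minus[OF assms] by simp
  then show ?thesis using assms Lim_transform by blast
qed

lemma convergent_iff_and_lim_eq:
  fixes f g :: "nat \<Rightarrow> 'a::t2_space"
  assumes "\<And>L. f \<longlonglongrightarrow> L \<longleftrightarrow> g \<longlonglongrightarrow> L"
  shows "(convergent f \<longleftrightarrow> convergent g) \<and> (convergent f \<longrightarrow> lim f = lim g)"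
  using assms by (metis convergent_def limI)

lemma real_Suc_le_two_power: "k < 2 ^ n \<Longrightarrow> real k + 1 \<le> 2 ^ n"
  by (metis Suc_leI add.commute of_nat_Suc of_nat_le_iff of_nat_numeral of_nat_power)

lemma dyadic_part_eq_image: "dyadic_part n = (\<lambda>k. real k / 2 ^ n) ` {..2 ^ n}"
  unfolding dyadic_part_def by auto

lemma dyadic_succ_dyadic:
  assumes "k \<le> 2 ^ n"
  shows "dyadic_succ n (real k / 2 ^ n) = min 1 ((real k + 1) / 2 ^ n)"
proof (cases "k < 2 ^ n")
  case True
  have k1: "real k + 1 \<le> 2 ^ n"
    using True by (rule real_Suc_le_two_power)
  have "Min {u \<in> dyadic_part n. u > real k / 2 ^ n} = (real k + 1) / 2 ^ n"
  proof (rule Min_eqI)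
    show "finite {u \<in> dyadic_part n. u > real k / 2 ^ n}"
      unfolding dyadic_part_eq_image by auto
    show "(real k + 1) / 2 ^ n \<in> {u \<in> dyadic_part n. u > real k / 2 ^ n}"
      unfolding dyadic_part_eq_image using True
      by (auto simp: divide_strict_right_mono intro!: image_eqI[where x = "Suc k"])
  next
    fix u assume "u \<in> {u \<in> dyadic_part n. u > real k / 2 ^ n}"
    then obtain l where u: "u = real l / 2 ^ n" and "k < l"
      unfolding dyadic_part_eq_image by (auto simp: divide_less_cancel)
    then have "real k + 1 \<le> real l"
      by (metis Suc_leI add.commute of_nat_Suc of_nat_le_iff)
    then show "(real k + 1) / 2 ^ n \<le> u"
      unfolding u by (simp add: divide_right_mono)
  qed
  moreover have "real k / 2 ^ n < 1"
    using True by (simp add: divide_less_eq)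
  ultimately show ?thesis
    using k1 by (simp add: dyadic_succ_def)
next
  case False
  then show ?thesis
    using assms by (simp add: dyadic_succ_def)
qed

definition dyadic_incr :: "(real \<Rightarrow> real) \<Rightarrow> nat \<Rightarrow> nat \<Rightarrow> real" where
  "dyadic_incr x n k = x ((real k + 1) / 2 ^ n) - x (real k / 2 ^ n)"

text \<open>As qv_n sums over all s \<le> t, it includes the increment from t to its successor.\<close>
lemma qv_n_dyadic:
  assumes "p \<le> 2 ^ n"
  shows "qv_n x n (real p / 2 ^ n) = (\<Sum>k<p. (dyadic_incr x n k)\<^sup>2)
           + (x (min 1 ((real p + 1) / 2 ^ n)) - x (real p / 2 ^ n))\<^sup>2"
proof -
  have points: "{s \<in> dyadic_part n. s \<le> real p / 2 ^ n} = (\<lambda>k. real k / 2 ^ n) ` {..p}"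
    unfolding dyadic_part_eq_image using assms by (force simp: divide_right_mono divide_le_cancel)
  have "inj_on (\<lambda>k. real k / 2 ^ n) {..p}"
    by (auto simp: inj_on_def)
  then have "qv_n x n (real p / 2 ^ n)
      = (\<Sum>k\<le>p. (x (min 1 ((real k + 1) / 2 ^ n)) - x (real k / 2 ^ n))\<^sup>2)"
    unfolding qv_n_def points using assms by (simp add: sum.reindex dyadic_succ_dyadic)
  also have "\<dots> = (\<Sum>k<p. (dyadic_incr x n k)\<^sup>2)
           + (x (min 1 ((real p + 1) / 2 ^ n)) - x (real p / 2 ^ n))\<^sup>2"
  proof -
    have "min 1 ((real k + 1) / 2 ^ n) = (real k + 1) / 2 ^ n" if "k < p" for k
    proof -
      have "real k + 1 \<le> 2 ^ n"
        using that assms by (intro real_Suc_le_two_power) simp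
      then show ?thesis by simp
    qed
    then show ?thesis
      by (simp add: lessThan_Suc_atMost[symmetric] dyadic_incr_def)
  qed
  finally show ?thesis .
qed

lemma fs_coeff_squared:
  "(fs_coeff x m k)\<^sup>2 = 2 ^ m *
     (2 * x ((2 * real k + 1) / 2 ^ (m + 1)) - x (real k / 2 ^ m) - x ((real k + 1) / 2 ^ m))\<^sup>2"
proof -
  have "(2 powr (real m / 2))\<^sup>2 = (2::real) ^ m"
    by (simp add: power2_eq_square powr_add[symmetric] powr_realpow)
  then show ?thesis
    by (simp add: fs_coeff_def power_mult_distrib)
qed

lemma dyadic_incr_refine:
  "(dyadic_incr x (Suc n) (2 * k))\<^sup>2 + (dyadic_incr x (Suc n) (2 * k + 1))\<^sup>2
     = (dyadic_incr x n k)\<^sup>2 / 2 + (fs_coeff x n k)\<^sup>2 / 2 ^ Suc n"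
proof -
  have left: "real (2 * k) / 2 ^ Suc n = real k / 2 ^ n"
    and mid: "(real (2 * k) + 1) / 2 ^ Suc n = (2 * real k + 1) / 2 ^ (n + 1)"
    and mid': "real (2 * k + 1) / 2 ^ Suc n = (2 * real k + 1) / 2 ^ (n + 1)"
    and right: "(real (2 * k + 1) + 1) / 2 ^ Suc n = (real k + 1) / 2 ^ n"
    by (simp_all add: field_simps)
  show ?thesis
    unfolding dyadic_incr_def fs_coeff_squared left mid mid' right
    by (simp add: field_simps power2_eq_square)
qed

lemma sum_dyadic_incr_refine:
  "(\<Sum>k<2 * p. (dyadic_incr x (Suc n) k)\<^sup>2)
     = (\<Sum>k<p. (dyadic_incr x n k)\<^sup>2) / 2 + (\<Sum>k<p. (fs_coeff x n k)\<^sup>2) / 2 ^ Suc n"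
proof (induction p)
  case 0
  show ?case by simp
next
  case (Suc p)
  have "(\<Sum>k<2 * Suc p. (dyadic_incr x (Suc n) k)\<^sup>2) = (\<Sum>k<2 * p. (dyadic_incr x (Suc n) k)\<^sup>2)
      + ((dyadic_incr x (Suc n) (2 * p))\<^sup>2 + (dyadic_incr x (Suc n) (2 * p + 1))\<^sup>2)"
    by simp
  then show ?case
    unfolding Suc.IH dyadic_incr_refine by (simp add: add_divide_distrib)
qed

lemma sum_dyadic_incr_iterate:
  "2 ^ (N + i) * (\<Sum>k<j * 2 ^ i. (dyadic_incr x (N + i) k)\<^sup>2)
     = 2 ^ N * (\<Sum>k<j. (dyadic_incr x N k)\<^sup>2) + (\<Sum>m<i. \<Sum>k<j * 2 ^ m. (fs_coeff x (N + m) k)\<^sup>2)"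
proof (induction i)
  case 0
  show ?case by simp
next
  case (Suc i)
  have "j * 2 ^ Suc i = 2 * (j * 2 ^ i)" by simp
  then have "2 ^ (N + Suc i) * (\<Sum>k<j * 2 ^ Suc i. (dyadic_incr x (N + Suc i) k)\<^sup>2)
      = 2 ^ (N + i) * (\<Sum>k<j * 2 ^ i. (dyadic_incr x (N + i) k)\<^sup>2)
        + (\<Sum>k<j * 2 ^ i. (fs_coeff x (N + i) k)\<^sup>2)"
    by (simp only: add_Suc_right sum_dyadic_incr_refine) (simp add: field_simps)
  then show ?case
    unfolding Suc.IH by simp
qed

lemma sum_lessThan_add:
  "(\<Sum>m<N + i. f m) = (\<Sum>m<N. f m) + (\<Sum>m<i. f (N + m))" for f :: "nat \<Rightarrow> 'a::comm_monoid_add"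
  by (induction i) (simp_all add: add.assoc)

lemma ell1_seq_Suc: "ell1_seq x t (Suc n) = (ell1_seq x t n + ell2_seq x t n) / 2"
  unfolding ell1_seq_def ell2_seq_def by (simp add: field_simps)

lemma ell1_seq_tendsto_iff_ell2_seq: "ell1_seq x t \<longlonglongrightarrow> L \<longleftrightarrow> ell2_seq x t \<longlonglongrightarrow> L"
  using ell1_seq_Suc by (rule averaging_recurrence_tendsto_iff)

lemma floor_dyadic_index:
  assumes "0 < j" "j \<le> (2::nat) ^ N"
  shows "nat \<lfloor>(2 ^ (N + i) - 1) * (real j / 2 ^ N)\<rfloor> = j * 2 ^ i - 1"
proof -
  have "(2 ^ (N + i) - 1) * (real j / 2 ^ N) = real (j * 2 ^ i) - real j / 2 ^ N"
    by (simp add: field_simps power_add)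
  moreover have "0 < real j / 2 ^ N" "real j / 2 ^ N \<le> 1"
    using assms by (simp_all add: divide_le_eq)
  moreover have "1 \<le> j * 2 ^ i"
    using assms by simp
  ultimately have "\<lfloor>(2 ^ (N + i) - 1) * (real j / 2 ^ N)\<rfloor> = int (j * 2 ^ i - 1)"
    by (auto simp: floor_eq_iff of_nat_diff)
  then show ?thesis by simp
qed

lemma qv_n_minus_ell1_seq_dyadic:
  assumes "0 < j" "j \<le> 2 ^ N" and t: "t = real j / 2 ^ N"
  obtains K where "\<And>i. qv_n x (N + i) t - ell1_seq x t (N + i)
    = K / 2 ^ (N + i) + (x (min 1 (t + 1 / 2 ^ (N + i))) - x t)\<^sup>2"
proof -
  define C where "C = (\<Sum>m<N. \<Sum>k = 0..nat \<lfloor>(2 ^ m - 1) * t\<rfloor>. (fs_coeff x m k)\<^sup>2)"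
  have "qv_n x (N + i) t - ell1_seq x t (N + i)
    = (2 ^ N * (\<Sum>k<j. (dyadic_incr x N k)\<^sup>2) - C) / 2 ^ (N + i)
      + (x (min 1 (t + 1 / 2 ^ (N + i))) - x t)\<^sup>2" for i
  proof -
    define S where "S = (\<Sum>m<i. \<Sum>k<j * 2 ^ m. (fs_coeff x (N + m) k)\<^sup>2)"
    have "qv_n x (N + i) t = (\<Sum>k<j * 2 ^ i. (dyadic_incr x (N + i) k)\<^sup>2)
        + (x (min 1 (t + 1 / 2 ^ (N + i))) - x t)\<^sup>2"
      using qv_n_dyadic[where p = "j * 2 ^ i" and n = "N + i"] assms(2)
      by (simp add: t add_divide_distrib power_add)
    also have "(\<Sum>k<j * 2 ^ i. (dyadic_incr x (N + i) k)\<^sup>2)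
        = (2 ^ N * (\<Sum>k<j. (dyadic_incr x N k)\<^sup>2) + S) / 2 ^ (N + i)"
      using sum_dyadic_incr_iterate[where N = N and i = i and j = j] unfolding S_def
      by (simp add: field_simps)
    moreover have "ell1_seq x t (N + i) = (C + S) / 2 ^ (N + i)"
    proof -
      have "{0..nat \<lfloor>(2 ^ (N + m) - 1) * t\<rfloor>} = {..<j * 2 ^ m}" for m
      proof -
        have "0 < j * 2 ^ m" using \<open>0 < j\<close> by simp
        then show ?thesis
          using floor_dyadic_index[OF assms(1,2), of m] unfolding t
          by (metis One_nat_def Suc_pred atLeast0AtMost lessThan_Suc_atMost)
      qed
      then show ?thesis
        unfolding ell1_seq_def C_def S_def sum_lessThan_add by simp
    qed
    ultimately show ?thesis
      by (simp add: field_simps)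
  qed
  then show thesis using that by blast
qed

lemma boundary_incr_tendsto_zero:
  fixes x :: "real \<Rightarrow> real"
  assumes x: "continuous_on {0..1} x" and t: "t \<in> {0..1}"
  shows "(\<lambda>n. (x (min 1 (t + 1 / 2 ^ n)) - x t)\<^sup>2) \<longlonglongrightarrow> 0"
proof -
  have "(\<lambda>n. min 1 (t + 1 / 2 ^ n)) \<longlonglongrightarrow> min 1 (t + 0)"
    by (intro tendsto_intros LIMSEQ_divide_realpow_zero) simp
  then have "(\<lambda>n. x (min 1 (t + 1 / 2 ^ n))) \<longlonglongrightarrow> x t"
    using t by (intro continuous_on_tendsto_compose[OF x]) (auto simp: min_def)
  then have "(\<lambda>n. (x (min 1 (t + 1 / 2 ^ n)) - x t)\<^sup>2) \<longlonglongrightarrow> (x t - x t)\<^sup>2"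
    by (intro tendsto_intros)
  then show ?thesis by simp
qed

lemma ell2_seq_at_zero_tendsto_zero:
  fixes x :: "real \<Rightarrow> real"
  assumes x: "continuous_on {0..1} x"
  shows "ell2_seq x 0 \<longlonglongrightarrow> 0"
proof -
  have "(\<lambda>n. x (1 / 2 ^ n)) \<longlonglongrightarrow> x 0"
    using LIMSEQ_divide_realpow_zero[of 2 1]
    by (intro continuous_on_tendsto_compose[OF x]) auto
  then have "(\<lambda>n. (2 * x (1 / 2 ^ (n + 1)) - x 0 - x (1 / 2 ^ n))\<^sup>2) \<longlonglongrightarrow> (2 * x 0 - x 0 - x 0)\<^sup>2"
    by (intro tendsto_intros LIMSEQ_ignore_initial_segment)
  moreover have "ell2_seq x 0 = (\<lambda>n. (2 * x (1 / 2 ^ (n + 1)) - x 0 - x (1 / 2 ^ n))\<^sup>2)"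
    by (simp add: fun_eq_iff ell2_seq_def fs_coeff_squared)
  ultimately show ?thesis by simp
qed

lemma qv_n_minus_ell1_seq_tendsto_zero:
  fixes x :: "real \<Rightarrow> real"
  assumes x: "continuous_on {0..1} x" and t: "t \<in> (\<Union>n. dyadic_part n)"
  shows "(\<lambda>n. qv_n x n t - ell1_seq x t n) \<longlonglongrightarrow> 0"
proof -
  obtain N j where j: "j \<le> 2 ^ N" and t_eq: "t = real j / 2 ^ N"
    using t unfolding dyadic_part_def by auto
  then have "t \<in> {0..1}"
    by (simp add: divide_le_eq)
  note boundary = boundary_incr_tendsto_zero[OF x this]
  show ?thesis
  proof (cases "j = 0")
    case True
    then have "t = 0" by (simp add: t_eq)
    have qv: "qv_n x n t = (x (min 1 (t + 1 / 2 ^ n)) - x t)\<^sup>2" for n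
      using qv_n_dyadic[where p = 0 and n = n] by (simp add: \<open>t = 0\<close>)
    have "ell1_seq x t \<longlonglongrightarrow> 0"
      using ell2_seq_at_zero_tendsto_zero[OF x] ell1_seq_tendsto_iff_ell2_seq
      unfolding \<open>t = 0\<close> by blast
    then show ?thesis
      using tendsto_diff[OF boundary, of "ell1_seq x t" 0] by (simp add: qv)
  next
    case False
    then obtain K where K: "\<And>i. qv_n x (N + i) t - ell1_seq x t (N + i)
        = K / 2 ^ (N + i) + (x (min 1 (t + 1 / 2 ^ (N + i))) - x t)\<^sup>2"
      using qv_n_minus_ell1_seq_dyadic[OF _ j t_eq] by blast
    have "(\<lambda>n. K / 2 ^ n + (x (min 1 (t + 1 / 2 ^ n)) - x t)\<^sup>2) \<longlonglongrightarrow> 0 + 0"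
      by (intro tendsto_add LIMSEQ_divide_realpow_zero boundary) simp
    then have "(\<lambda>i. qv_n x (i + N) t - ell1_seq x t (i + N)) \<longlonglongrightarrow> 0"
      using LIMSEQ_ignore_initial_segment[of _ 0 N] by (simp add: K add.commute[of _ N])
    then show ?thesis
      by (rule LIMSEQ_offset)
  qed
qed

theorem proposition2p1:
  fixes x :: "real \<Rightarrow> real" and t :: real
  assumes "continuous_on {0..1} x"
    and "t \<in> (\<Union>n. dyadic_part n)"
  shows "(convergent (\<lambda>n. qv_n x n t) \<longleftrightarrow> convergent (ell1_seq x t))
       \<and> (convergent (ell1_seq x t) \<longleftrightarrow> convergent (ell2_seq x t))
       \<and> (convergent (\<lambda>n. qv_n x n t) \<longrightarrow>
            lim (\<lambda>n. qv_n x n t) = lim (ell1_seq x t)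
            \<and> lim (ell1_seq x t) = lim (ell2_seq x t))"
proof -
  have "(\<lambda>n. qv_n x n t) \<longlonglongrightarrow> L \<longleftrightarrow> ell1_seq x t \<longlonglongrightarrow> L" for L
    by (rule tendsto_iff_diff_tendsto_zero[OF qv_n_minus_ell1_seq_tendsto_zero[OF assms]])
  moreover have "ell1_seq x t \<longlonglongrightarrow> L \<longleftrightarrow> ell2_seq x t \<longlonglongrightarrow> L" for L
    by (rule ell1_seq_tendsto_iff_ell2_seq)
  ultimately show ?thesis
    using convergent_iff_and_lim_eq by metis
qed

end
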